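(* Let $(X_n)_{n\le0}$ be a strongly monotonic Markov process with values in $[0,1]^d$, with $\rho$ and $\delta$ as below. Let $(\rho_n)_{n\le0}$ be the iterated Kantorovich pseudometrics of $(X_n)$ starting from $\rho_0=\rho$ on $A_0$, and for each $k$ let $(\delta^{(k)}_n)_{n\le0}$ be the iterated Kantorovich pseudometrics of the coordinate process $(X_n(k))_{n\le0}$ starting from $\delta$. Then for every $n\le -1$ and all $x_n,x'_n\in A_n$, $\rho_n(x_n,x'_n)$ is the Kantorovich distance (induced by $\rho$) between $\mathcal{L}(X_0\mid X_n=x_n)$ and $\mathcal{L}(X_0\mid X_n=x'_n)$, and $$\rho_n(x_n,x'_n)=\sum_{k=1}^d a_k\,\delta^{(k)}_n\big(x_n(k),x'_n(k)\big).$$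
   Context: $d\ge1$ integer or $d=\infty$; $A_n$ is the support of the law of $X_n$; $\rho(x,x')=\sum_{k=1}^d a_k|x(k)-x'(k)|$ with $a_k>0$, $\sum a_k=1$; $\delta(s,t)=|s-t|$. Kantorovich pseudometric: $\rho'(\mu,\nu)=\inf\mathbb{E}[\rho(X_\mu,X_\nu)]$ over couplings. Iterated Kantorovich pseudometrics of a Markov process $(Z_n)$ starting from a pseudometric $\rho_0$ on the state space at time $0$: $\rho_n(z,z')=(\rho_{n+1})'\big(\mathcal{L}(Z_{n+1}\mid Z_n=z),\mathcal{L}(Z_{n+1}\mid Z_n=z')\big)$ for $n<0$. Monotonic ($\mathbb{R}^d$-valued): for each $n<0$ and $x,x'\in A_n$ there is a coupling $(Y,Y')$ of $\mathcal{L}(X_{n+1}\mid X_n=x)$ and $\mathcal{L}(X_{n+1}\mid X_n=x')$, depending measurably on $(x,x')$, with $x(k)\le x'(k)\Rightarrow Y(k)\le Y'(k)$ a.s. and $x(k)\ge x'(k)\Rightarrow Y(k)\ge Y'(k)$ a.s. for each $k$. Strongly monotonic: monotonic, each coordinate process Markovian, and its natural filtration immersed in that of $(X_n)$. *)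

theory Defs
  imports "HOL-Probability.Probability"
begin

definition coords :: "enat \<Rightarrow> nat set" where
  "coords d = {k. 1 \<le> k \<and> enat k \<le> d}"

text \<open>The cube [0,1]^d, realised inside nat => real (coordinates outside {1..d} are 0);
  nat => real carries the product topology (Function_Topology) and its Borel sigma-algebra.\<close>
definition cube :: "enat \<Rightarrow> (nat \<Rightarrow> real) set" where
  "cube d = {x. (\<forall>k\<in>coords d. 0 \<le> x k \<and> x k \<le> 1) \<and> (\<forall>k. k \<notin> coords d \<longrightarrow> x k = 0)}"

definition rho :: "enat \<Rightarrow> (nat \<Rightarrow> real) \<Rightarrow> (nat \<Rightarrow> real) \<Rightarrow> (nat \<Rightarrow> real) \<Rightarrow> real" where
  "rho d a x x' = (\<Sum>\<^sub>\<infinity>k\<in>coords d. a k * \<bar>x k - x' k\<bar>)"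

definition delta :: "real \<Rightarrow> real \<Rightarrow> real" where
  "delta s t = \<bar>s - t\<bar>"

definition measure_support :: "'a::topological_space measure \<Rightarrow> 'a set" where
  "measure_support M = {x. \<forall>U. open U \<longrightarrow> x \<in> U \<longrightarrow> emeasure M U \<noteq> 0}"

definition couplings :: "'a measure \<Rightarrow> 'a measure \<Rightarrow> 'a measure \<Rightarrow> ('a \<times> 'a) measure set" where
  "couplings M \<mu> \<nu> = {\<pi> \<in> space (prob_algebra (M \<Otimes>\<^sub>M M)).
       distr \<pi> M fst = \<mu> \<and> distr \<pi> M snd = \<nu>}"

definition kantorovich :: "'a measure \<Rightarrow> ('a \<Rightarrow> 'a \<Rightarrow> real) \<Rightarrow> 'a measure \<Rightarrow> 'a measure \<Rightarrow> real" where
  "kantorovich M r \<mu> \<nu> =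
     enn2real (\<Sqinter>\<pi>\<in>couplings M \<mu> \<nu>. \<integral>\<^sup>+ z. ennreal (r (fst z) (snd z)) \<partial>\<pi>)"

text \<open>Iterated Kantorovich pseudometrics: K n z is (a version of) the law of Z_{n+1} given Z_n = z
  (n < 0).  iter_kant M K r0 m is the pseudometric at time -m.\<close>
primrec iter_kant :: "'a measure \<Rightarrow> (int \<Rightarrow> 'a \<Rightarrow> 'a measure) \<Rightarrow> ('a \<Rightarrow> 'a \<Rightarrow> real) \<Rightarrow> nat
    \<Rightarrow> 'a \<Rightarrow> 'a \<Rightarrow> real" where
  "iter_kant M K r0 0 = r0"
| "iter_kant M K r0 (Suc m) = (\<lambda>z z'. kantorovich M (iter_kant M K r0 m)
      (K (- int m - 1) z) (K (- int m - 1) z'))"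

definition iterated_kantorovich :: "'a measure \<Rightarrow> (int \<Rightarrow> 'a \<Rightarrow> 'a measure) \<Rightarrow> ('a \<Rightarrow> 'a \<Rightarrow> real)
    \<Rightarrow> int \<Rightarrow> 'a \<Rightarrow> 'a \<Rightarrow> real" where
  "iterated_kantorovich M K r0 n = iter_kant M K r0 (nat (- n))"

primrec law_to_0 :: "'a measure \<Rightarrow> (int \<Rightarrow> 'a \<Rightarrow> 'a measure) \<Rightarrow> nat \<Rightarrow> 'a \<Rightarrow> 'a measure" where
  "law_to_0 M K 0 = (\<lambda>z. return M z)"
| "law_to_0 M K (Suc m) = (\<lambda>z. bind (K (- int m - 1) z) (law_to_0 M K m))"

definition cond_law_X0 :: "'a measure \<Rightarrow> (int \<Rightarrow> 'a \<Rightarrow> 'a measure) \<Rightarrow> int \<Rightarrow> 'a \<Rightarrow> 'a measure" where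
  "cond_law_X0 M K n z = law_to_0 M K (nat (- n)) z"

definition monotone_coupling :: "enat \<Rightarrow> ((nat \<Rightarrow> real) \<times> (nat \<Rightarrow> real)) measure
    \<Rightarrow> (nat \<Rightarrow> real) \<Rightarrow> (nat \<Rightarrow> real) \<Rightarrow> bool" where
  "monotone_coupling d \<pi> x x' \<longleftrightarrow> (\<forall>k\<in>coords d.
      (x k \<le> x' k \<longrightarrow> (AE z in \<pi>. fst z k \<le> snd z k)) \<and>
      (x k \<ge> x' k \<longrightarrow> (AE z in \<pi>. fst z k \<ge> snd z k)))"

end

theory Submission
  imports Defs
begin

text \<open>Write \<open>f\<^sub>k\<^sup>m(x)\<close> for the conditional mean of \<open>clip(X\<^sub>0(k))\<close> given \<open>X\<^sub>-\<^sub>m = x\<close>, where \<open>clip\<close>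
  truncates to \<open>[0,1]\<close>: on the cube, which carries all the mass, this is the mean of \<open>X\<^sub>0(k)\<close>, and the
  truncation keeps every mean in \<open>[0,1]\<close> everywhere. Under a monotone coupling of the transition kernels
  every coordinate moves in a fixed direction, so by induction \<open>f\<^sub>k\<^sup>m\<close> is monotone in \<open>x(k)\<close>, and under
  that coupling each difference \<open>f\<^sub>k\<^sup>m(Y) - f\<^sub>k\<^sup>m(Y')\<close> has a constant sign. Hence the coupling turns
  \<open>\<Sum> a\<^sub>k |f\<^sub>k\<^sup>m(Y) - f\<^sub>k\<^sup>m(Y')|\<close> exactly into \<open>\<Sum> a\<^sub>k |f\<^sub>k\<^sup>m\<^sup>+\<^sup>1(x) - f\<^sub>k\<^sup>m\<^sup>+\<^sup>1(x')|\<close>, while by Jensen no coupling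
  does better, and by induction \<open>\<rho>\<^sub>-\<^sub>m(x,x') = \<Sum> a\<^sub>k |f\<^sub>k\<^sup>m(x) - f\<^sub>k\<^sup>m(x')|\<close>. The same argument for the coordinate
  chains, whose conditional means agree with \<open>f\<^sub>k\<^sup>m\<close> because each coordinate is itself Markov, gives
  \<open>\<delta>\<^sup>(\<^sup>k\<^sup>)\<^sub>-\<^sub>m(x(k),x'(k)) = |f\<^sub>k\<^sup>m(x) - f\<^sub>k\<^sup>m(x')|\<close>; gluing the monotone couplings along the chain yields a coupling
  of the two laws of \<open>X\<^sub>0\<close> at which the Kantorovich distance attains the same value.\<close>

section \<open>Infinite sums and bounded integrals\<close>

lemma infsum_nat_eq_SUP_lessThan:
  fixes f :: "nat \<Rightarrow> ennreal"
  shows "infsum f A = (SUP n. sum f (A \<inter> {..<n}))"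
proof -
  have "infsum f A = (SUP F\<in>{F. finite F \<and> F \<subseteq> A}. sum f F)"
    by (rule nonneg_infsum_complete) auto
  also have "\<dots> = (SUP n. sum f (A \<inter> {..<n}))"
  proof (rule antisym)
    show "(SUP F\<in>{F. finite F \<and> F \<subseteq> A}. sum f F) \<le> (SUP n. sum f (A \<inter> {..<n}))"
    proof (rule SUP_least)
      fix F assume "F \<in> {F. finite F \<and> F \<subseteq> A}"
      then have "F \<subseteq> A \<inter> {..<Suc (Max (insert 0 F))}"
        using Max_ge[of "insert 0 F"] by (auto simp: less_Suc_eq_le)
      then have "sum f F \<le> sum f (A \<inter> {..<Suc (Max (insert 0 F))})"
        by (intro sum_mono2) auto
      also have "\<dots> \<le> (SUP n. sum f (A \<inter> {..<n}))" by (rule SUP_upper) auto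
      finally show "sum f F \<le> (SUP n. sum f (A \<inter> {..<n}))" .
    qed
    show "(SUP n. sum f (A \<inter> {..<n})) \<le> (SUP F\<in>{F. finite F \<and> F \<subseteq> A}. sum f F)"
      by (rule SUP_least, rule SUP_upper) auto
  qed
  finally show ?thesis .
qed

lemma nn_integral_infsum:
  fixes f :: "nat \<Rightarrow> 'a \<Rightarrow> ennreal"
  assumes [measurable]: "\<And>k. f k \<in> borel_measurable M"
  shows "(\<integral>\<^sup>+x. (\<Sum>\<^sub>\<infinity>k\<in>A. f k x) \<partial>M) = (\<Sum>\<^sub>\<infinity>k\<in>A. \<integral>\<^sup>+x. f k x \<partial>M)"
proof -
  have "(\<integral>\<^sup>+x. (\<Sum>\<^sub>\<infinity>k\<in>A. f k x) \<partial>M) = (\<integral>\<^sup>+x. (SUP n. sum (\<lambda>k. f k x) (A \<inter> {..<n})) \<partial>M)"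
    by (simp add: infsum_nat_eq_SUP_lessThan)
  also have "\<dots> = (SUP n. \<integral>\<^sup>+x. sum (\<lambda>k. f k x) (A \<inter> {..<n}) \<partial>M)"
    by (rule nn_integral_monotone_convergence_SUP)
       (auto simp: incseq_def le_fun_def intro!: sum_mono2)
  also have "\<dots> = (SUP n. sum (\<lambda>k. \<integral>\<^sup>+x. f k x \<partial>M) (A \<inter> {..<n}))"
    by (subst nn_integral_sum) auto
  also have "\<dots> = (\<Sum>\<^sub>\<infinity>k\<in>A. \<integral>\<^sup>+x. f k x \<partial>M)"
    by (simp add: infsum_nat_eq_SUP_lessThan)
  finally show ?thesis .
qed

lemma ennreal_infsum:
  fixes f :: "'b \<Rightarrow> real"
  assumes "f summable_on A" "\<And>x. x \<in> A \<Longrightarrow> 0 \<le> f x"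
  shows "ennreal (\<Sum>\<^sub>\<infinity>x\<in>A. f x) = (\<Sum>\<^sub>\<infinity>x\<in>A. ennreal (f x))"
proof -
  have "sum (ennreal \<circ> f) F = ennreal (sum f F)" if "finite F" "F \<subseteq> A" for F
    using that assms(2) by (metis (mono_tags, lifting) comp_def subsetD sum.cong sum_ennreal)
  then have "ennreal (infsum f A) = infsum (ennreal \<circ> f) A"
    by (simp add: infsum_comm_additive_general assms(1))
  then show ?thesis by (simp add: comp_def)
qed

lemma ennreal_infsum_weighted_unit_interval:
  fixes a t :: "nat \<Rightarrow> real"
  assumes a: "a summable_on I" "\<And>k. k \<in> I \<Longrightarrow> 0 \<le> a k"
    and t: "\<And>k. k \<in> I \<Longrightarrow> 0 \<le> t k" "\<And>k. k \<in> I \<Longrightarrow> t k \<le> 1"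
  shows "ennreal (\<Sum>\<^sub>\<infinity>k\<in>I. a k * t k) = (\<Sum>\<^sub>\<infinity>k\<in>I. ennreal (a k) * ennreal (t k))"
proof -
  have "(\<lambda>k. a k * t k) summable_on I"
    by (rule summable_on_comparison_test[OF a(1)]) (use a t in \<open>auto intro: mult_left_le\<close>)
  then show ?thesis
    using a(2) t(1) by (auto simp: ennreal_infsum ennreal_mult intro!: infsum_cong)
qed

lemma integral_abs_eq_abs_integral:
  fixes g :: "'a \<Rightarrow> real"
  assumes [measurable]: "g \<in> borel_measurable M"
    and "(AE x in M. g x \<le> 0) \<or> (AE x in M. 0 \<le> g x)"
  shows "(\<integral>x. \<bar>g x\<bar> \<partial>M) = \<bar>\<integral>x. g x \<partial>M\<bar>"
  using assms(2)
proof
  assume ae: "AE x in M. g x \<le> 0"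
  have "(\<integral>x. \<bar>g x\<bar> \<partial>M) = (\<integral>x. - g x \<partial>M)"
    by (rule integral_cong_AE) (use ae in auto)
  moreover have "0 \<le> (\<integral>x. - g x \<partial>M)"
    by (rule integral_nonneg_AE) (use ae in auto)
  ultimately show ?thesis by simp
next
  assume ae: "AE x in M. 0 \<le> g x"
  have "(\<integral>x. \<bar>g x\<bar> \<partial>M) = (\<integral>x. g x \<partial>M)"
    by (rule integral_cong_AE) (use ae in auto)
  moreover have "0 \<le> (\<integral>x. g x \<partial>M)"
    by (rule integral_nonneg_AE) (use ae in auto)
  ultimately show ?thesis by simp
qed

lemma prob_algebraD:
  assumes "N \<in> space (prob_algebra M)"
  shows "prob_space N" "sets N = sets M" "space N = space M"
  using assms sets_eq_imp_space_eq by (auto simp: space_prob_algebra)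

lemma integral_unit_interval:
  fixes f :: "'a \<Rightarrow> real"
  assumes N: "N \<in> space (prob_algebra M)" and f: "f \<in> borel_measurable M"
    and f01: "\<And>x. x \<in> space M \<Longrightarrow> 0 \<le> f x" "\<And>x. x \<in> space M \<Longrightarrow> f x \<le> 1"
  shows "0 \<le> (\<integral>x. f x \<partial>N)" "(\<integral>x. f x \<partial>N) \<le> 1"
proof -
  interpret prob_space N using prob_algebraD(1)[OF N] .
  have space: "space N = space M" by (rule prob_algebraD(3)[OF N])
  have "f \<in> borel_measurable N"
    using f measurable_cong_sets[of N M borel borel] prob_algebraD(2)[OF N] by simp
  then have "integrable N f"
    by (intro integrable_const_bound[where B=1] AE_I2) (simp_all add: space f01 abs_le_iff)
  show "0 \<le> (\<integral>x. f x \<partial>N)" by (rule integral_nonneg_AE) (rule AE_I2, simp add: space f01)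
  show "(\<integral>x. f x \<partial>N) \<le> 1"
    by (rule integral_le_const) (simp add: \<open>integrable N f\<close>, rule AE_I2, simp add: space f01)
qed

section \<open>The cube, supports and backward means\<close>

lemma closed_measure_support: "closed (measure_support M)"
proof -
  have "- measure_support M = \<Union>{U. open U \<and> emeasure M U = 0}"
    by (auto simp: measure_support_def)
  then show ?thesis unfolding closed_def by auto
qed

lemma measure_support_subset_closed:
  fixes \<mu> :: "'a::topological_space measure"
  assumes \<mu>: "\<mu> \<in> space (prob_algebra borel)" and "closed C" "emeasure \<mu> C = 1"
  shows "measure_support \<mu> \<subseteq> C"
proof
  fix x assume x: "x \<in> measure_support \<mu>"
  interpret prob_space \<mu> using prob_algebraD(1)[OF \<mu>] .
  have space: "space \<mu> = UNIV" using prob_algebraD(3)[OF \<mu>] by simp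
  have "C \<in> sets \<mu>" using prob_algebraD(2)[OF \<mu>] \<open>closed C\<close> by auto
  then have "emeasure \<mu> (space \<mu> - C) = emeasure \<mu> (space \<mu>) - emeasure \<mu> C"
    by (rule emeasure_compl) simp
  then have "emeasure \<mu> (- C) = 0"
    using \<open>emeasure \<mu> C = 1\<close> emeasure_space_1 space by (simp add: Compl_eq_Diff_UNIV)
  with x \<open>closed C\<close> show "x \<in> C" unfolding measure_support_def by auto
qed

lemma closed_cube: "closed (cube d)"
proof -
  have "cube d = (\<Inter>k\<in>coords d. {x. 0 \<le> x k} \<inter> {x. x k \<le> 1}) \<inter> (\<Inter>k\<in>- coords d. {x. x k = 0})"
    by (auto simp: cube_def)
  moreover have "closed {x::nat\<Rightarrow>real. 0 \<le> x k}" "closed {x::nat\<Rightarrow>real. x k \<le> 1}"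
    "closed {x::nat\<Rightarrow>real. x k = 0}" for k
    by (auto intro!: closed_Collect_le closed_Collect_eq continuous_on_const)
  ultimately show ?thesis by (auto intro!: closed_Int closed_INT)
qed

lemma compact_cube: "compact (cube d)"
proof -
  define S where "S = (\<lambda>k. if k \<in> coords d then {0..1::real} else {0})"
  have "cube d = PiE UNIV S"
    by (auto simp: cube_def S_def PiE_def Pi_def)
  moreover have "compactin (product_topology (\<lambda>_. euclidean) UNIV) (PiE UNIV S)"
    by (subst compactin_PiE) (auto simp: S_def)
  ultimately show ?thesis by (simp add: euclidean_product_topology)
qed

lemma closed_coordinate_image:
  assumes "closed S" "S \<subseteq> cube d"
  shows "closed ((\<lambda>y::nat\<Rightarrow>real. y k) ` S)"
proof -
  have "compact S" using compact_cube assms by (metis compact_Int_closed inf.absorb_iff2)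
  then have "compact ((\<lambda>y::nat\<Rightarrow>real. y k) ` S)"
    by (intro compact_continuous_image continuous_on_subset[OF continuous_on_product_coordinates]) auto
  then show ?thesis by (rule compact_imp_closed)
qed

lemma borel_measurable_coordinate[measurable]: "(\<lambda>y::nat\<Rightarrow>real. y k) \<in> borel_measurable borel"
  by (rule borel_measurable_continuous_onI) simp

lemma borel_measurable_pair_coordinates[measurable]:
  "(\<lambda>z::(nat\<Rightarrow>real)\<times>(nat\<Rightarrow>real). fst z k) \<in> borel_measurable (borel \<Otimes>\<^sub>M borel)"
  "(\<lambda>z::(nat\<Rightarrow>real)\<times>(nat\<Rightarrow>real). snd z k) \<in> borel_measurable (borel \<Otimes>\<^sub>M borel)"
  by (rule measurable_compose[OF measurable_fst borel_measurable_coordinate],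
      rule measurable_compose[OF measurable_snd borel_measurable_coordinate])

definition clip :: "real \<Rightarrow> real" where
  "clip t = max 0 (min 1 t)"

lemma clip_unit_interval[simp]: "0 \<le> clip t" "clip t \<le> 1"
  by (auto simp: clip_def)

lemma clip_mono: "s \<le> t \<Longrightarrow> clip s \<le> clip t"
  by (auto simp: clip_def)

lemma clip_id: "0 \<le> t \<Longrightarrow> t \<le> 1 \<Longrightarrow> clip t = t"
  by (auto simp: clip_def)

lemma rho_clip_on_cube:
  "y \<in> cube d \<Longrightarrow> y' \<in> cube d \<Longrightarrow> rho d a y y' = (\<Sum>\<^sub>\<infinity>k\<in>coords d. a k * \<bar>clip (y k) - clip (y' k)\<bar>)"
  unfolding rho_def by (rule infsum_cong) (simp add: cube_def clip_id)

lemma borel_measurable_clip[measurable]: "clip \<in> borel_measurable borel"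
  unfolding clip_def by measurable

text \<open>\<open>backward_mean K f m x\<close> is the conditional mean of \<open>f(Z\<^sub>0)\<close> given \<open>Z\<^sub>-\<^sub>m = x\<close>.\<close>
primrec backward_mean :: "(int \<Rightarrow> 'a \<Rightarrow> 'a measure) \<Rightarrow> ('a \<Rightarrow> real) \<Rightarrow> nat \<Rightarrow> 'a \<Rightarrow> real" where
  "backward_mean K f 0 = f"
| "backward_mean K f (Suc m) = (\<lambda>x. \<integral>y. backward_mean K f m y \<partial>K (- int m - 1) x)"

lemma backward_mean_measurable_unit_interval:
  fixes f :: "'a \<Rightarrow> real"
  assumes K: "\<And>n. n < 0 \<Longrightarrow> K n \<in> measurable M (prob_algebra M)"
    and f: "f \<in> borel_measurable M"
    and f01: "\<And>x. x \<in> space M \<Longrightarrow> 0 \<le> f x" "\<And>x. x \<in> space M \<Longrightarrow> f x \<le> 1"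
  shows "backward_mean K f m \<in> borel_measurable M \<and>
    (\<forall>x\<in>space M. 0 \<le> backward_mean K f m x \<and> backward_mean K f m x \<le> 1)"
proof (induction m)
  case 0
  then show ?case using f f01 by simp
next
  case (Suc m)
  have Km: "K (- int m - 1) \<in> measurable M (prob_algebra M)" using K by simp
  from Suc have [measurable]: "backward_mean K f m \<in> borel_measurable M" by simp
  show ?case
    using Suc integral_unit_interval[OF measurable_space[OF Km]]
    by (auto simp: measurable_compose[OF measurable_prob_algebraD[OF Km] integral_measurable_subprob_algebra])
qed

lemma law_to_0_measurable:
  assumes K: "\<And>n. n < 0 \<Longrightarrow> K n \<in> measurable M (prob_algebra M)"
  shows "law_to_0 M K m \<in> measurable M (prob_algebra M)"
proof (induction m)
  case 0
  have "(\<lambda>z. return M z) = return M" by (rule ext) simp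
  then show ?case by (simp add: measurable_return_prob_space)
next
  case (Suc m)
  show ?case using measurable_bind_prob_space[OF K Suc] by simp
qed

lemma integral_law_to_0:
  fixes f :: "'a \<Rightarrow> real"
  assumes K: "\<And>n. n < 0 \<Longrightarrow> K n \<in> measurable M (prob_algebra M)"
    and f[measurable]: "f \<in> borel_measurable M"
    and f01: "\<And>x. x \<in> space M \<Longrightarrow> 0 \<le> f x" "\<And>x. x \<in> space M \<Longrightarrow> f x \<le> 1"
    and x: "x \<in> space M"
  shows "(\<integral>z. f z \<partial>law_to_0 M K m x) = backward_mean K f m x"
  using x
proof (induction m arbitrary: x)
  case 0
  then show ?case by (simp add: integral_return)
next
  case (Suc m)
  have Km: "K (- int m - 1) \<in> measurable M (prob_algebra M)" using K by simp
  have Kx: "K (- int m - 1) x \<in> space (prob_algebra M)" by (rule measurable_space[OF Km Suc.prems])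
  interpret prob_space "K (- int m - 1) x" using prob_algebraD(1)[OF Kx] .
  have L: "law_to_0 M K m \<in> measurable (K (- int m - 1) x) (subprob_algebra M)"
    using measurable_prob_algebraD[OF law_to_0_measurable[OF K]]
    by (simp add: measurable_cong_sets[OF prob_algebraD(2)[OF Kx] refl])
  have "(\<integral>z. f z \<partial>law_to_0 M K (Suc m) x) = (\<integral>y. (\<integral>z. f z \<partial>law_to_0 M K m y) \<partial>K (- int m - 1) x)"
  proof (simp, rule integral_bind[where K=M and B=1 and B'=1])
    show "\<bar>f z\<bar> \<le> 1" if "z \<in> space M" for z using f01[OF that] by simp
    show "AE y in K (- int m - 1) x. emeasure (law_to_0 M K m y) (space (law_to_0 M K m y)) \<le> ennreal 1"
      using prob_algebraD(1)[OF measurable_space[OF law_to_0_measurable[OF K]]]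
      by (intro AE_I2) (simp add: prob_space.emeasure_space_1 prob_algebraD(3)[OF Kx])
  qed (simp_all add: L, unfold_locales)
  also have "\<dots> = backward_mean K f (Suc m) x"
    by (simp, rule Bochner_Integration.integral_cong) (use Suc.IH prob_algebraD(3)[OF Kx] in auto)
  finally show ?case .
qed

section \<open>Couplings\<close>

lemma couplingD:
  assumes "\<pi> \<in> couplings M \<mu> \<nu>"
  shows "prob_space \<pi>" "sets \<pi> = sets (M \<Otimes>\<^sub>M M)" "distr \<pi> M fst = \<mu>" "distr \<pi> M snd = \<nu>"
  using assms by (auto simp: couplings_def space_prob_algebra)

lemma coupling_AE:
  assumes \<pi>: "\<pi> \<in> couplings M \<mu> \<nu>" and A: "A \<in> sets M"
    and "AE x in \<mu>. x \<in> A" "AE x in \<nu>. x \<in> A"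
  shows "AE z in \<pi>. fst z \<in> A \<and> snd z \<in> A"
proof -
  note cD = couplingD[OF \<pi>]
  have [measurable_cong]: "sets \<pi> = sets (M \<Otimes>\<^sub>M M)" by (rule cD(2))
  have "AE z in \<pi>. fst z \<in> A"
    using assms(3) unfolding cD(3)[symmetric] by (subst (asm) AE_distr_iff) (use A in auto)
  moreover have "AE z in \<pi>. snd z \<in> A"
    using assms(4) unfolding cD(4)[symmetric] by (subst (asm) AE_distr_iff) (use A in auto)
  ultimately show ?thesis by eventually_elim simp
qed

lemma coupling_integral:
  fixes h :: "'a \<Rightarrow> real"
  assumes \<pi>: "\<pi> \<in> couplings M \<mu> \<nu>" and [measurable]: "h \<in> borel_measurable M"
  shows "(\<integral>x. h x \<partial>\<mu>) = (\<integral>z. h (fst z) \<partial>\<pi>)" "(\<integral>x. h x \<partial>\<nu>) = (\<integral>z. h (snd z) \<partial>\<pi>)"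
proof -
  note cD = couplingD[OF \<pi>]
  have [measurable_cong]: "sets \<pi> = sets (M \<Otimes>\<^sub>M M)" by (rule cD(2))
  show "(\<integral>x. h x \<partial>\<mu>) = (\<integral>z. h (fst z) \<partial>\<pi>)"
    unfolding cD(3)[symmetric] by (rule integral_distr) measurable
  show "(\<integral>x. h x \<partial>\<nu>) = (\<integral>z. h (snd z) \<partial>\<pi>)"
    unfolding cD(4)[symmetric] by (rule integral_distr) measurable
qed

lemma coupling_integrable:
  fixes h :: "'a \<Rightarrow> real"
  assumes \<pi>: "\<pi> \<in> couplings M \<mu> \<nu>" and [measurable]: "h \<in> borel_measurable M"
    and h01: "\<And>x. 0 \<le> h x" "\<And>x. h x \<le> 1"
  shows "integrable \<pi> (\<lambda>z. h (fst z))" "integrable \<pi> (\<lambda>z. h (snd z))"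
proof -
  note cD = couplingD[OF \<pi>]
  interpret prob_space \<pi> by (rule cD(1))
  have [measurable_cong]: "sets \<pi> = sets (M \<Otimes>\<^sub>M M)" by (rule cD(2))
  show "integrable \<pi> (\<lambda>z. h (fst z))" "integrable \<pi> (\<lambda>z. h (snd z))"
    by (auto intro!: integrable_const_bound[where B=1] AE_I2 simp: abs_le_iff h01)
qed

lemma coupling_integral_mono:
  fixes h :: "'a \<Rightarrow> real"
  assumes \<pi>: "\<pi> \<in> couplings M \<mu> \<nu>" and h: "h \<in> borel_measurable M"
    and h01: "\<And>x. 0 \<le> h x" "\<And>x. h x \<le> 1"
    and "AE z in \<pi>. h (fst z) \<le> h (snd z)"
  shows "(\<integral>x. h x \<partial>\<mu>) \<le> (\<integral>x. h x \<partial>\<nu>)"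
  unfolding coupling_integral[OF \<pi> h]
  by (rule integral_mono_AE[OF coupling_integrable[OF \<pi> h h01] assms(5)])

lemma coupling_abs_integral_diff:
  fixes h :: "'a \<Rightarrow> real"
  assumes \<pi>: "\<pi> \<in> couplings M \<mu> \<nu>" and h[measurable]: "h \<in> borel_measurable M"
    and h01: "\<And>x. 0 \<le> h x" "\<And>x. h x \<le> 1"
  shows "(\<integral>\<^sup>+z. ennreal \<bar>h (fst z) - h (snd z)\<bar> \<partial>\<pi>) = ennreal (\<integral>z. \<bar>h (fst z) - h (snd z)\<bar> \<partial>\<pi>)"
    and "\<bar>(\<integral>x. h x \<partial>\<mu>) - (\<integral>x. h x \<partial>\<nu>)\<bar> = \<bar>\<integral>z. h (fst z) - h (snd z) \<partial>\<pi>\<bar>"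
proof -
  note int = coupling_integrable[OF \<pi> h h01]
  show "(\<integral>\<^sup>+z. ennreal \<bar>h (fst z) - h (snd z)\<bar> \<partial>\<pi>) = ennreal (\<integral>z. \<bar>h (fst z) - h (snd z)\<bar> \<partial>\<pi>)"
    by (rule nn_integral_eq_integral) (use int in auto)
  show "\<bar>(\<integral>x. h x \<partial>\<mu>) - (\<integral>x. h x \<partial>\<nu>)\<bar> = \<bar>\<integral>z. h (fst z) - h (snd z) \<partial>\<pi>\<bar>"
    using int by (simp add: coupling_integral[OF \<pi> h])
qed

lemma abs_integral_diff_le_coupling:
  fixes h :: "'a \<Rightarrow> real"
  assumes \<pi>: "\<pi> \<in> couplings M \<mu> \<nu>" and h: "h \<in> borel_measurable M"
    and h01: "\<And>x. 0 \<le> h x" "\<And>x. h x \<le> 1"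
  shows "ennreal \<bar>(\<integral>x. h x \<partial>\<mu>) - (\<integral>x. h x \<partial>\<nu>)\<bar> \<le> (\<integral>\<^sup>+z. ennreal \<bar>h (fst z) - h (snd z)\<bar> \<partial>\<pi>)"
  unfolding coupling_abs_integral_diff[OF \<pi> h h01]
  by (rule ennreal_leI) (use integral_norm_bound[of \<pi> "\<lambda>z. h (fst z) - h (snd z)"] in simp)

lemma abs_integral_diff_eq_coupling:
  fixes h :: "'a \<Rightarrow> real"
  assumes \<pi>: "\<pi> \<in> couplings M \<mu> \<nu>" and h[measurable]: "h \<in> borel_measurable M"
    and h01: "\<And>x. 0 \<le> h x" "\<And>x. h x \<le> 1"
    and ordered: "(AE z in \<pi>. h (fst z) \<le> h (snd z)) \<or> (AE z in \<pi>. h (snd z) \<le> h (fst z))"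
  shows "(\<integral>\<^sup>+z. ennreal \<bar>h (fst z) - h (snd z)\<bar> \<partial>\<pi>) = ennreal \<bar>(\<integral>x. h x \<partial>\<mu>) - (\<integral>x. h x \<partial>\<nu>)\<bar>"
proof -
  have [measurable_cong]: "sets \<pi> = sets (M \<Otimes>\<^sub>M M)" by (rule couplingD(2)[OF \<pi>])
  have "(AE z in \<pi>. h (fst z) - h (snd z) \<le> 0) \<or> (AE z in \<pi>. 0 \<le> h (fst z) - h (snd z))"
    using ordered by (auto elim: AE_mp)
  then show ?thesis
    unfolding coupling_abs_integral_diff[OF \<pi> h h01]
    by (subst integral_abs_eq_abs_integral) auto
qed

lemma coupling_weighted_abs_diff:
  fixes h :: "nat \<Rightarrow> 'a \<Rightarrow> real" and a :: "nat \<Rightarrow> real"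
  assumes \<pi>: "\<pi> \<in> couplings M \<mu> \<nu>" and h[measurable]: "\<And>k. h k \<in> borel_measurable M"
    and h01: "\<And>k x. 0 \<le> h k x" "\<And>k x. h k x \<le> 1"
    and a: "a summable_on I" "\<And>k. k \<in> I \<Longrightarrow> 0 \<le> a k"
  shows "(\<integral>\<^sup>+z. ennreal (\<Sum>\<^sub>\<infinity>k\<in>I. a k * \<bar>h k (fst z) - h k (snd z)\<bar>) \<partial>\<pi>)
      = (\<Sum>\<^sub>\<infinity>k\<in>I. ennreal (a k) * (\<integral>\<^sup>+z. ennreal \<bar>h k (fst z) - h k (snd z)\<bar> \<partial>\<pi>))"
    and "ennreal (\<Sum>\<^sub>\<infinity>k\<in>I. a k * \<bar>(\<integral>x. h k x \<partial>\<mu>) - (\<integral>x. h k x \<partial>\<nu>)\<bar>)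
      = (\<Sum>\<^sub>\<infinity>k\<in>I. ennreal (a k) * ennreal \<bar>(\<integral>x. h k x \<partial>\<mu>) - (\<integral>x. h k x \<partial>\<nu>)\<bar>)"
proof -
  have [measurable_cong]: "sets \<pi> = sets (M \<Otimes>\<^sub>M M)" by (rule couplingD(2)[OF \<pi>])
  have h_diff_le_1: "\<bar>h k x - h k y\<bar> \<le> 1" for k x y using h01[of k x] h01[of k y] by auto
  have "(\<integral>\<^sup>+z. ennreal (\<Sum>\<^sub>\<infinity>k\<in>I. a k * \<bar>h k (fst z) - h k (snd z)\<bar>) \<partial>\<pi>)
      = (\<integral>\<^sup>+z. (\<Sum>\<^sub>\<infinity>k\<in>I. ennreal (a k) * ennreal \<bar>h k (fst z) - h k (snd z)\<bar>) \<partial>\<pi>)"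
    by (subst ennreal_infsum_weighted_unit_interval[OF a]) (simp_all add: h_diff_le_1)
  also have "\<dots> = (\<Sum>\<^sub>\<infinity>k\<in>I. ennreal (a k) * (\<integral>\<^sup>+z. ennreal \<bar>h k (fst z) - h k (snd z)\<bar> \<partial>\<pi>))"
    by (subst nn_integral_infsum) (auto intro!: infsum_cong nn_integral_cmult)
  finally show "(\<integral>\<^sup>+z. ennreal (\<Sum>\<^sub>\<infinity>k\<in>I. a k * \<bar>h k (fst z) - h k (snd z)\<bar>) \<partial>\<pi>)
      = (\<Sum>\<^sub>\<infinity>k\<in>I. ennreal (a k) * (\<integral>\<^sup>+z. ennreal \<bar>h k (fst z) - h k (snd z)\<bar> \<partial>\<pi>))" .
  have integral_diff_le_1: "\<bar>(\<integral>x. h k x \<partial>\<mu>) - (\<integral>x. h k x \<partial>\<nu>)\<bar> \<le> 1" for k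
  proof -
    have "ennreal \<bar>(\<integral>x. h k x \<partial>\<mu>) - (\<integral>x. h k x \<partial>\<nu>)\<bar> \<le> (\<integral>\<^sup>+z. ennreal \<bar>h k (fst z) - h k (snd z)\<bar> \<partial>\<pi>)"
      by (rule abs_integral_diff_le_coupling[OF \<pi> h h01])
    also have "\<dots> \<le> (\<integral>\<^sup>+z. 1 \<partial>\<pi>)"
      by (rule nn_integral_mono) (simp add: h_diff_le_1)
    finally show ?thesis by (simp add: prob_space.emeasure_space_1[OF couplingD(1)[OF \<pi>]])
  qed
  show "ennreal (\<Sum>\<^sub>\<infinity>k\<in>I. a k * \<bar>(\<integral>x. h k x \<partial>\<mu>) - (\<integral>x. h k x \<partial>\<nu>)\<bar>)
      = (\<Sum>\<^sub>\<infinity>k\<in>I. ennreal (a k) * ennreal \<bar>(\<integral>x. h k x \<partial>\<mu>) - (\<integral>x. h k x \<partial>\<nu>)\<bar>)"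
    by (rule ennreal_infsum_weighted_unit_interval[OF a,
          where t="\<lambda>k. \<bar>(\<integral>x. h k x \<partial>\<mu>) - (\<integral>x. h k x \<partial>\<nu>)\<bar>"])
       (simp_all add: integral_diff_le_1)
qed

lemma weighted_abs_integral_diff_le_coupling:
  fixes h :: "nat \<Rightarrow> 'a \<Rightarrow> real" and a :: "nat \<Rightarrow> real"
  assumes \<pi>: "\<pi> \<in> couplings M \<mu> \<nu>" and h: "\<And>k. h k \<in> borel_measurable M"
    and h01: "\<And>k x. 0 \<le> h k x" "\<And>k x. h k x \<le> 1"
    and a: "a summable_on I" "\<And>k. k \<in> I \<Longrightarrow> 0 \<le> a k"
  shows "ennreal (\<Sum>\<^sub>\<infinity>k\<in>I. a k * \<bar>(\<integral>x. h k x \<partial>\<mu>) - (\<integral>x. h k x \<partial>\<nu>)\<bar>)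
      \<le> (\<integral>\<^sup>+z. ennreal (\<Sum>\<^sub>\<infinity>k\<in>I. a k * \<bar>h k (fst z) - h k (snd z)\<bar>) \<partial>\<pi>)"
proof -
  have "ennreal (\<Sum>\<^sub>\<infinity>k\<in>I. a k * \<bar>(\<integral>x. h k x \<partial>\<mu>) - (\<integral>x. h k x \<partial>\<nu>)\<bar>)
      = (\<Sum>\<^sub>\<infinity>k\<in>I. ennreal (a k) * ennreal \<bar>(\<integral>x. h k x \<partial>\<mu>) - (\<integral>x. h k x \<partial>\<nu>)\<bar>)"
    by (rule coupling_weighted_abs_diff(2)) (use assms in auto)
  also have "\<dots> \<le> (\<Sum>\<^sub>\<infinity>k\<in>I. ennreal (a k) * (\<integral>\<^sup>+z. ennreal \<bar>h k (fst z) - h k (snd z)\<bar> \<partial>\<pi>))"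
    by (rule infsum_mono)
       (auto intro: nonneg_summable_on_complete intro!: mult_left_mono abs_integral_diff_le_coupling[OF \<pi> h h01])
  also have "\<dots> = (\<integral>\<^sup>+z. ennreal (\<Sum>\<^sub>\<infinity>k\<in>I. a k * \<bar>h k (fst z) - h k (snd z)\<bar>) \<partial>\<pi>)"
    by (rule coupling_weighted_abs_diff(1)[symmetric]) (use assms in auto)
  finally show ?thesis .
qed

lemma weighted_abs_integral_diff_eq_coupling:
  fixes h :: "nat \<Rightarrow> 'a \<Rightarrow> real" and a :: "nat \<Rightarrow> real"
  assumes \<pi>: "\<pi> \<in> couplings M \<mu> \<nu>" and h: "\<And>k. h k \<in> borel_measurable M"
    and h01: "\<And>k x. 0 \<le> h k x" "\<And>k x. h k x \<le> 1"
    and a: "a summable_on I" "\<And>k. k \<in> I \<Longrightarrow> 0 \<le> a k"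
    and ordered: "\<And>k. k \<in> I \<Longrightarrow>
      (AE z in \<pi>. h k (fst z) \<le> h k (snd z)) \<or> (AE z in \<pi>. h k (snd z) \<le> h k (fst z))"
  shows "(\<integral>\<^sup>+z. ennreal (\<Sum>\<^sub>\<infinity>k\<in>I. a k * \<bar>h k (fst z) - h k (snd z)\<bar>) \<partial>\<pi>)
      = ennreal (\<Sum>\<^sub>\<infinity>k\<in>I. a k * \<bar>(\<integral>x. h k x \<partial>\<mu>) - (\<integral>x. h k x \<partial>\<nu>)\<bar>)"
proof -
  have "(\<integral>\<^sup>+z. ennreal (\<Sum>\<^sub>\<infinity>k\<in>I. a k * \<bar>h k (fst z) - h k (snd z)\<bar>) \<partial>\<pi>)
      = (\<Sum>\<^sub>\<infinity>k\<in>I. ennreal (a k) * (\<integral>\<^sup>+z. ennreal \<bar>h k (fst z) - h k (snd z)\<bar> \<partial>\<pi>))"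
    by (rule coupling_weighted_abs_diff(1)) (use assms in auto)
  also have "\<dots> = (\<Sum>\<^sub>\<infinity>k\<in>I. ennreal (a k) * ennreal \<bar>(\<integral>x. h k x \<partial>\<mu>) - (\<integral>x. h k x \<partial>\<nu>)\<bar>)"
    by (rule infsum_cong) (simp add: abs_integral_diff_eq_coupling[OF \<pi> h h01 ordered])
  also have "\<dots> = ennreal (\<Sum>\<^sub>\<infinity>k\<in>I. a k * \<bar>(\<integral>x. h k x \<partial>\<mu>) - (\<integral>x. h k x \<partial>\<nu>)\<bar>)"
    by (rule coupling_weighted_abs_diff(2)[symmetric]) (use assms in auto)
  finally show ?thesis .
qed

lemma kantorovich_eqI:
  assumes lower: "\<And>\<pi>. \<pi> \<in> couplings M \<mu> \<nu> \<Longrightarrow> ennreal L \<le> (\<integral>\<^sup>+z. ennreal (r (fst z) (snd z)) \<partial>\<pi>)"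
    and optimal: "\<pi>0 \<in> couplings M \<mu> \<nu>" "(\<integral>\<^sup>+z. ennreal (r (fst z) (snd z)) \<partial>\<pi>0) = ennreal L"
    and "0 \<le> L"
  shows "kantorovich M r \<mu> \<nu> = L"
proof -
  have "(\<Sqinter>\<pi>\<in>couplings M \<mu> \<nu>. \<integral>\<^sup>+ z. ennreal (r (fst z) (snd z)) \<partial>\<pi>) = ennreal L"
  proof (rule antisym)
    show "(\<Sqinter>\<pi>\<in>couplings M \<mu> \<nu>. \<integral>\<^sup>+ z. ennreal (r (fst z) (snd z)) \<partial>\<pi>) \<le> ennreal L"
      using INF_lower[OF optimal(1), of "\<lambda>\<pi>. \<integral>\<^sup>+ z. ennreal (r (fst z) (snd z)) \<partial>\<pi>"] optimal(2)
      by simp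
    show "ennreal L \<le> (\<Sqinter>\<pi>\<in>couplings M \<mu> \<nu>. \<integral>\<^sup>+ z. ennreal (r (fst z) (snd z)) \<partial>\<pi>)"
      by (rule INF_greatest) (rule lower)
  qed
  then show ?thesis using \<open>0 \<le> L\<close> by (simp add: kantorovich_def)
qed

lemma monotone_coupling_orders:
  assumes "monotone_coupling d \<pi> x x'" "k \<in> coords d"
    and supp: "AE z in \<pi>. fst z \<in> A \<and> snd z \<in> A"
    and mono: "\<And>y y'. y \<in> A \<Longrightarrow> y' \<in> A \<Longrightarrow> y k \<le> y' k \<Longrightarrow> f y \<le> f y'"
  shows "(AE z in \<pi>. f (fst z) \<le> f (snd z)) \<or> (AE z in \<pi>. f (snd z) \<le> f (fst z))"
proof (cases "x k \<le> x' k")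
  case True
  then have "AE z in \<pi>. fst z k \<le> snd z k"
    using assms(1,2) unfolding monotone_coupling_def by blast
  with supp have "AE z in \<pi>. f (fst z) \<le> f (snd z)" by eventually_elim (auto intro: mono)
  then show ?thesis ..
next
  case False
  then have "AE z in \<pi>. snd z k \<le> fst z k"
    using assms(1,2) unfolding monotone_coupling_def by auto
  with supp have "AE z in \<pi>. f (snd z) \<le> f (fst z)" by eventually_elim (auto intro: mono)
  then show ?thesis ..
qed

lemma coupling_distr_map_prod:
  assumes \<pi>: "\<pi> \<in> couplings M \<mu> \<nu>" and g[measurable]: "g \<in> measurable M N"
  shows "distr \<pi> (N \<Otimes>\<^sub>M N) (map_prod g g) \<in> couplings N (distr \<mu> N g) (distr \<nu> N g)"
  unfolding couplings_def
proof (intro CollectI conjI)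
  note cD = couplingD[OF \<pi>]
  have [measurable_cong]: "sets \<pi> = sets (M \<Otimes>\<^sub>M M)" by (rule cD(2))
  have gg[measurable]: "map_prod g g \<in> measurable \<pi> (N \<Otimes>\<^sub>M N)" by (simp add: map_prod_def)
  show "distr \<pi> (N \<Otimes>\<^sub>M N) (map_prod g g) \<in> space (prob_algebra (N \<Otimes>\<^sub>M N))"
    using prob_space.prob_space_distr[OF cD(1) gg] by (simp add: space_prob_algebra)
  have "distr (distr \<pi> (N \<Otimes>\<^sub>M N) (map_prod g g)) N fst = distr (distr \<pi> M fst) N g"
    by (simp add: distr_distr comp_def)
  then show "distr (distr \<pi> (N \<Otimes>\<^sub>M N) (map_prod g g)) N fst = distr \<mu> N g"
    using cD(3) by simp
  have "distr (distr \<pi> (N \<Otimes>\<^sub>M N) (map_prod g g)) N snd = distr (distr \<pi> M snd) N g"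
    by (simp add: distr_distr comp_def)
  then show "distr (distr \<pi> (N \<Otimes>\<^sub>M N) (map_prod g g)) N snd = distr \<nu> N g"
    using cD(4) by simp
qed

lemma coupling_bind:
  assumes C: "C \<in> couplings M \<mu> \<nu>"
    and E: "E \<in> measurable (M \<Otimes>\<^sub>M M) (prob_algebra (M \<Otimes>\<^sub>M M))"
    and F: "F \<in> measurable M (prob_algebra M)"
    and glue: "AE q in C. E q \<in> couplings M (F (fst q)) (F (snd q))"
  shows "C \<bind> E \<in> couplings M (\<mu> \<bind> F) (\<nu> \<bind> F)"
proof -
  note cD = couplingD[OF C]
  have [measurable_cong]: "sets C = sets (M \<Otimes>\<^sub>M M)" by (rule cD(2))
  have EC: "E \<in> measurable C (subprob_algebra (M \<Otimes>\<^sub>M M))"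
    using measurable_prob_algebraD[OF E] by (simp add: measurable_cong_sets[OF cD(2) refl])
  have FM: "F \<in> measurable M (subprob_algebra M)" by (rule measurable_prob_algebraD[OF F])
  have nonempty: "space C \<noteq> {}" using prob_space.not_empty[OF cD(1)] .
  have E_space: "E q \<in> space (prob_algebra (M \<Otimes>\<^sub>M M))" if "q \<in> space C" for q
    using measurable_space[OF E] that sets_eq_imp_space_eq[OF cD(2)] by simp
  have marginal: "distr (C \<bind> E) M f = \<rho> \<bind> F"
    if f: "f = fst \<and> \<rho> = \<mu> \<or> f = snd \<and> \<rho> = \<nu>" for f \<rho>
  proof -
    have f_meas[measurable]: "f \<in> measurable (M \<Otimes>\<^sub>M M) M" using f by auto
    then have fC: "f \<in> measurable C M" by (simp add: measurable_cong_sets[OF cD(2) refl])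
    have "distr (C \<bind> E) M f = C \<bind> (\<lambda>q. distr (E q) M f)"
      by (rule distr_bind[OF EC nonempty f_meas])
    also have "\<dots> = C \<bind> (\<lambda>q. F (f q))"
    proof (rule bind_cong_AE[where B=M])
      show "(\<lambda>q. distr (E q) M f) \<in> measurable C (subprob_algebra M)"
        by (rule measurable_compose[OF EC measurable_distr[OF f_meas]])
      show "(\<lambda>q. F (f q)) \<in> measurable C (subprob_algebra M)"
        by (rule measurable_compose[OF fC FM])
      show "AE q in C. distr (E q) M f = F (f q)"
        using glue by eventually_elim (use f in \<open>auto simp: couplings_def\<close>)
    qed simp
    also have "\<dots> = distr C M f \<bind> F"
      by (rule bind_distr[OF fC FM nonempty, symmetric])
    finally show ?thesis using f cD(3,4) by auto
  qed
  show ?thesis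
    unfolding couplings_def
  proof (intro CollectI conjI)
    have "prob_space (C \<bind> E)"
      by (rule prob_space.prob_space_bind[OF cD(1) _ EC])
         (use E_space in \<open>auto simp: space_prob_algebra\<close>)
    moreover have "sets (C \<bind> E) = sets (M \<Otimes>\<^sub>M M)"
      by (rule sets_bind[OF _ nonempty]) (use E_space in \<open>auto simp: space_prob_algebra\<close>)
    ultimately show "C \<bind> E \<in> space (prob_algebra (M \<Otimes>\<^sub>M M))"
      by (simp add: space_prob_algebra)
  qed (simp_all add: marginal)
qed

lemma monotone_coupling_bind:
  assumes C: "monotone_coupling d C x x'"
    and E: "E \<in> measurable C (subprob_algebra (borel \<Otimes>\<^sub>M borel))"
    and glue: "AE q in C. monotone_coupling d (E q) (fst q) (snd q)"
  shows "monotone_coupling d (C \<bind> E) x x'"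
  unfolding monotone_coupling_def
proof (intro ballI conjI impI)
  fix k assume k: "k \<in> coords d"
  have [measurable]: "Measurable.pred (borel \<Otimes>\<^sub>M borel) (\<lambda>z. (fst z k :: real) \<le> snd z k)"
    "Measurable.pred (borel \<Otimes>\<^sub>M borel) (\<lambda>z. (snd z k :: real) \<le> fst z k)"
    by measurable
  show "AE z in C \<bind> E. fst z k \<le> snd z k" if "x k \<le> x' k"
  proof -
    have "AE q in C. fst q k \<le> snd q k" using C k that unfolding monotone_coupling_def by blast
    with glue have "AE q in C. AE z in E q. fst z k \<le> snd z k"
      by eventually_elim (use k in \<open>auto simp: monotone_coupling_def\<close>)
    then show ?thesis by (simp add: AE_bind[OF E])
  qed
  show "AE z in C \<bind> E. snd z k \<le> fst z k" if "x' k \<le> x k"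
  proof -
    have "AE q in C. snd q k \<le> fst q k" using C k that unfolding monotone_coupling_def by blast
    with glue have "AE q in C. AE z in E q. snd z k \<le> fst z k"
      by eventually_elim (use k in \<open>auto simp: monotone_coupling_def\<close>)
    then show ?thesis by (simp add: AE_bind[OF E])
  qed
qed

section \<open>Monotonic Markov processes on the cube\<close>

locale monotonic_cube_process =
  fixes d :: enat and a :: "nat \<Rightarrow> real"
    and \<mu> :: "int \<Rightarrow> (nat \<Rightarrow> real) measure"
    and K :: "int \<Rightarrow> (nat \<Rightarrow> real) \<Rightarrow> (nat \<Rightarrow> real) measure"
    and Q :: "nat \<Rightarrow> int \<Rightarrow> real \<Rightarrow> real measure"
  assumes a_pos: "\<forall>k\<in>coords d. a k > 0"
    and a_sum: "(a has_sum 1) (coords d)"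
    and laws: "\<forall>n\<le>0. \<mu> n \<in> space (prob_algebra borel) \<and> emeasure (\<mu> n) (cube d) = 1"
    and kernels: "\<forall>n<0. K n \<in> measurable borel (prob_algebra borel)"
    and conc: "\<forall>n<0. \<forall>x\<in>measure_support (\<mu> n).
                 emeasure (K n x) (measure_support (\<mu> (n + 1))) = 1"
    and monotonic: "\<forall>n<0. \<exists>C. C \<in> measurable
                 (restrict_space (borel \<Otimes>\<^sub>M borel) (measure_support (\<mu> n) \<times> measure_support (\<mu> n)))
                 (prob_algebra (borel \<Otimes>\<^sub>M borel)) \<and>
               (\<forall>x\<in>measure_support (\<mu> n). \<forall>x'\<in>measure_support (\<mu> n).
                  C (x, x') \<in> couplings borel (K n x) (K n x') \<and> monotone_coupling d (C (x, x')) x x')"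
    and coordinates: "\<forall>k\<in>coords d. \<forall>n<0. Q k n \<in> measurable borel (prob_algebra borel) \<and>
               (\<forall>x\<in>measure_support (\<mu> n). distr (K n x) borel (\<lambda>y. y k) = Q k n (x k))"
begin

text \<open>Time \<open>-m\<close> is indexed by \<open>m :: nat\<close>; \<open>step m\<close> is the kernel from time \<open>-(m+1)\<close> to time \<open>-m\<close>.\<close>

definition supp :: "nat \<Rightarrow> (nat \<Rightarrow> real) set" where
  "supp m = measure_support (\<mu> (- int m))"

abbreviation step :: "nat \<Rightarrow> (nat \<Rightarrow> real) \<Rightarrow> (nat \<Rightarrow> real) measure" where
  "step m \<equiv> K (- int m - 1)"

abbreviation mean :: "nat \<Rightarrow> nat \<Rightarrow> (nat \<Rightarrow> real) \<Rightarrow> real" where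
  "mean k \<equiv> backward_mean K (\<lambda>y. clip (y k))"

abbreviation coord_mean :: "nat \<Rightarrow> nat \<Rightarrow> real \<Rightarrow> real" where
  "coord_mean k \<equiv> backward_mean (Q k) clip"

definition mono_coupling :: "nat \<Rightarrow> (nat \<Rightarrow> real) \<times> (nat \<Rightarrow> real) \<Rightarrow> ((nat \<Rightarrow> real) \<times> (nat \<Rightarrow> real)) measure" where
  "mono_coupling m = (SOME C. C \<in> measurable
      (restrict_space (borel \<Otimes>\<^sub>M borel) (supp (Suc m) \<times> supp (Suc m))) (prob_algebra (borel \<Otimes>\<^sub>M borel)) \<and>
    (\<forall>x\<in>supp (Suc m). \<forall>x'\<in>supp (Suc m).
      C (x, x') \<in> couplings borel (step m x) (step m x') \<and> monotone_coupling d (C (x, x')) x x'))"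

lemma supp_Suc: "supp (Suc m) = measure_support (\<mu> (- int m - 1))"
  unfolding supp_def by (rule arg_cong[where f="\<lambda>n. measure_support (\<mu> n)"]) simp

lemma mono_coupling:
  shows "mono_coupling m \<in> measurable
      (restrict_space (borel \<Otimes>\<^sub>M borel) (supp (Suc m) \<times> supp (Suc m))) (prob_algebra (borel \<Otimes>\<^sub>M borel))"
    and "x \<in> supp (Suc m) \<Longrightarrow> x' \<in> supp (Suc m) \<Longrightarrow>
      mono_coupling m (x, x') \<in> couplings borel (step m x) (step m x')"
    and "x \<in> supp (Suc m) \<Longrightarrow> x' \<in> supp (Suc m) \<Longrightarrow> monotone_coupling d (mono_coupling m (x, x')) x x'"
proof -
  have "\<exists>C. C \<in> measurable
      (restrict_space (borel \<Otimes>\<^sub>M borel) (supp (Suc m) \<times> supp (Suc m))) (prob_algebra (borel \<Otimes>\<^sub>M borel)) \<and>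
    (\<forall>x\<in>supp (Suc m). \<forall>x'\<in>supp (Suc m).
      C (x, x') \<in> couplings borel (step m x) (step m x') \<and> monotone_coupling d (C (x, x')) x x')"
    using monotonic unfolding supp_Suc by simp
  from someI_ex[OF this] show
    "mono_coupling m \<in> measurable
      (restrict_space (borel \<Otimes>\<^sub>M borel) (supp (Suc m) \<times> supp (Suc m))) (prob_algebra (borel \<Otimes>\<^sub>M borel))"
    "x \<in> supp (Suc m) \<Longrightarrow> x' \<in> supp (Suc m) \<Longrightarrow>
      mono_coupling m (x, x') \<in> couplings borel (step m x) (step m x')"
    "x \<in> supp (Suc m) \<Longrightarrow> x' \<in> supp (Suc m) \<Longrightarrow> monotone_coupling d (mono_coupling m (x, x')) x x'"
    unfolding mono_coupling_def by blast+
qed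

lemma kernel_measurable: "n < 0 \<Longrightarrow> K n \<in> measurable borel (prob_algebra borel)"
  using kernels by simp

lemma step_prob_algebra: "step m x \<in> space (prob_algebra borel)"
  using measurable_space[OF kernel_measurable] by simp

lemma prob_space_step: "prob_space (step m x)"
  and sets_step[measurable_cong]: "sets (step m x) = sets borel"
  using prob_algebraD[OF step_prob_algebra] by auto

lemma coordinate_kernel_measurable: "k \<in> coords d \<Longrightarrow> n < 0 \<Longrightarrow> Q k n \<in> measurable borel (prob_algebra borel)"
  using coordinates by simp

lemma distr_step_coordinate:
  "k \<in> coords d \<Longrightarrow> x \<in> supp (Suc m) \<Longrightarrow> distr (step m x) borel (\<lambda>y. y k) = Q k (- int m - 1) (x k)"
  using coordinates unfolding supp_Suc by simp

lemma closed_supp: "closed (supp m)"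
  unfolding supp_def by (rule closed_measure_support)

lemma sets_supp[measurable]: "supp m \<in> sets borel"
  using closed_supp by auto

lemma supp_subset_cube: "supp m \<subseteq> cube d"
  unfolding supp_def by (rule measure_support_subset_closed) (use laws closed_cube in auto)

lemma supp_unit_interval: "x \<in> supp m \<Longrightarrow> k \<in> coords d \<Longrightarrow> 0 \<le> x k \<and> x k \<le> 1"
  using supp_subset_cube by (auto simp: cube_def)

lemma AE_step_supp: "x \<in> supp (Suc m) \<Longrightarrow> AE y in step m x. y \<in> supp m"
proof -
  assume x: "x \<in> supp (Suc m)"
  interpret prob_space "step m x" by (rule prob_space_step)
  have "- int m - 1 < 0" by simp
  then have "emeasure (step m x) (measure_support (\<mu> (- int m - 1 + 1))) = 1"
    using conc x unfolding supp_Suc by blast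
  then have "emeasure (step m x) (supp m) = 1" by (simp add: supp_def)
  then show ?thesis by (subst AE_in_set_eq_1) (auto simp: emeasure_eq_measure)
qed

lemma coupling_step_AE_supp:
  assumes "\<pi> \<in> couplings borel (step m x) (step m x')" "x \<in> supp (Suc m)" "x' \<in> supp (Suc m)"
  shows "AE z in \<pi>. fst z \<in> supp m \<and> snd z \<in> supp m"
  using coupling_AE[OF assms(1) sets_supp] AE_step_supp assms(2,3) by blast

lemma mean_measurable[measurable]: "mean k m \<in> borel_measurable borel"
  and mean_unit_interval: "0 \<le> mean k m x" "mean k m x \<le> 1"
  using backward_mean_measurable_unit_interval[where K=K and M=borel and f="\<lambda>y. clip (y k)" and m=m]
    kernel_measurable by auto

lemma coord_mean_measurable[measurable]: "k \<in> coords d \<Longrightarrow> coord_mean k m \<in> borel_measurable borel"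
  and coord_mean_unit_interval: "k \<in> coords d \<Longrightarrow> 0 \<le> coord_mean k m s" "k \<in> coords d \<Longrightarrow> coord_mean k m s \<le> 1"
  using backward_mean_measurable_unit_interval[where K="Q k" and M=borel and f=clip and m=m]
    coordinate_kernel_measurable by auto

lemma a_nonneg: "k \<in> coords d \<Longrightarrow> 0 \<le> a k"
  using a_pos by (simp add: less_imp_le)

lemma a_summable: "a summable_on coords d"
  using a_sum by (rule has_sum_imp_summable)

lemma mean_mono:
  assumes k: "k \<in> coords d" and "x \<in> supp m" "x' \<in> supp m" "x k \<le> x' k"
  shows "mean k m x \<le> mean k m x'"
  using assms(2-4)
proof (induction m arbitrary: x x')
  case 0
  then show ?case by (simp add: clip_mono)
next
  case (Suc m)
  note C = mono_coupling(2,3)[OF Suc.prems(1,2)]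
  have "AE z in mono_coupling m (x, x'). fst z k \<le> snd z k"
    using C(2) k Suc.prems(3) unfolding monotone_coupling_def by blast
  with coupling_step_AE_supp[OF C(1) Suc.prems(1,2)]
  have "AE z in mono_coupling m (x, x'). mean k m (fst z) \<le> mean k m (snd z)"
    by eventually_elim (auto intro: Suc.IH)
  then show ?case
    using coupling_integral_mono[OF C(1) mean_measurable mean_unit_interval] by simp
qed

lemma coord_mean_eq_mean:
  assumes k: "k \<in> coords d" and "x \<in> supp m"
  shows "coord_mean k m (x k) = mean k m x"
  using assms(2)
proof (induction m arbitrary: x)
  case 0
  then show ?case by simp
next
  case (Suc m)
  have [measurable]: "coord_mean k m \<in> borel_measurable borel"
    by (rule coord_mean_measurable[OF k])
  have "coord_mean k (Suc m) (x k) = (\<integral>t. coord_mean k m t \<partial>distr (step m x) borel (\<lambda>y. y k))"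
    by (simp add: distr_step_coordinate[OF k Suc.prems])
  also have "\<dots> = (\<integral>y. coord_mean k m (y k) \<partial>step m x)"
    by (rule integral_distr) simp_all
  also have "\<dots> = (\<integral>y. mean k m y \<partial>step m x)"
  proof (rule integral_cong_AE)
    show "AE y in step m x. coord_mean k m (y k) = mean k m y"
      using AE_step_supp[OF Suc.prems] by eventually_elim (rule Suc.IH)
  qed simp_all
  also have "\<dots> = mean k (Suc m) x" by simp
  finally show ?case .
qed

lemma iter_kant_eq_weighted_means:
  assumes "x \<in> supp m" "x' \<in> supp m"
  shows "iter_kant borel K (rho d a) m x x' = (\<Sum>\<^sub>\<infinity>k\<in>coords d. a k * \<bar>mean k m x - mean k m x'\<bar>)"
  using assms
proof (induction m arbitrary: x x')
  case 0
  then show ?case by (auto simp: rho_def clip_id supp_unit_interval intro!: infsum_cong)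
next
  case (Suc m)
  let ?L = "\<Sum>\<^sub>\<infinity>k\<in>coords d. a k * \<bar>mean k (Suc m) x - mean k (Suc m) x'\<bar>"
  have cost: "(\<integral>\<^sup>+z. ennreal (iter_kant borel K (rho d a) m (fst z) (snd z)) \<partial>\<pi>)
      = (\<integral>\<^sup>+z. ennreal (\<Sum>\<^sub>\<infinity>k\<in>coords d. a k * \<bar>mean k m (fst z) - mean k m (snd z)\<bar>) \<partial>\<pi>)"
    if \<pi>: "\<pi> \<in> couplings borel (step m x) (step m x')" for \<pi>
    by (rule nn_integral_cong_AE)
       (use coupling_step_AE_supp[OF \<pi> Suc.prems] in \<open>eventually_elim, simp add: Suc.IH\<close>)
  note C = mono_coupling(2,3)[OF Suc.prems]
  have "kantorovich borel (iter_kant borel K (rho d a) m) (step m x) (step m x') = ?L"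
  proof (rule kantorovich_eqI)
    fix \<pi> assume \<pi>: "\<pi> \<in> couplings borel (step m x) (step m x')"
    show "ennreal ?L \<le> (\<integral>\<^sup>+z. ennreal (iter_kant borel K (rho d a) m (fst z) (snd z)) \<partial>\<pi>)"
      unfolding cost[OF \<pi>]
      using weighted_abs_integral_diff_le_coupling[OF \<pi> mean_measurable mean_unit_interval a_summable a_nonneg]
      by simp
  next
    have "(AE z in mono_coupling m (x, x'). mean k m (fst z) \<le> mean k m (snd z)) \<or>
        (AE z in mono_coupling m (x, x'). mean k m (snd z) \<le> mean k m (fst z))" if k: "k \<in> coords d" for k
      by (rule monotone_coupling_orders[OF C(2) k coupling_step_AE_supp[OF C(1) Suc.prems]])
         (rule mean_mono[OF k])
    then show "(\<integral>\<^sup>+z. ennreal (iter_kant borel K (rho d a) m (fst z) (snd z)) \<partial>mono_coupling m (x, x'))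
        = ennreal ?L"
      unfolding cost[OF C(1)]
      using weighted_abs_integral_diff_eq_coupling[OF C(1) mean_measurable mean_unit_interval a_summable a_nonneg]
      by simp
  qed (use C(1) a_nonneg in \<open>auto intro: infsum_nonneg\<close>)
  then show ?case by simp
qed

lemma coord_iter_kant_eq_abs_mean_diff:
  assumes k: "k \<in> coords d" and "x \<in> supp m" "x' \<in> supp m"
  shows "iter_kant borel (Q k) delta m (x k) (x' k) = \<bar>mean k m x - mean k m x'\<bar>"
  using assms(2,3)
proof (induction m arbitrary: x x')
  case 0
  then show ?case by (simp add: delta_def clip_id supp_unit_interval[OF _ k])
next
  case (Suc m)
  let ?Q = "Q k (- int m - 1)"
  let ?L = "\<bar>mean k (Suc m) x - mean k (Suc m) x'\<bar>"
  have [measurable]: "coord_mean k m \<in> borel_measurable borel" by (rule coord_mean_measurable[OF k])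
  define T where "T = (\<lambda>y. y k) ` supp m"
  have [measurable]: "T \<in> sets borel"
    unfolding T_def using closed_coordinate_image[OF closed_supp supp_subset_cube] by auto
  have cost_on_T: "iter_kant borel (Q k) delta m s t = \<bar>coord_mean k m s - coord_mean k m t\<bar>"
    if "s \<in> T" "t \<in> T" for s t
    using that Suc.IH by (auto simp: T_def coord_mean_eq_mean[OF k])
  have AE_T: "AE s in ?Q (z k). s \<in> T" if z: "z \<in> supp (Suc m)" for z
  proof -
    have "AE y in step m z. y k \<in> T" using AE_step_supp[OF z] by eventually_elim (auto simp: T_def)
    then show ?thesis unfolding distr_step_coordinate[OF k z, symmetric] by (subst AE_distr_iff) auto
  qed
  have cost: "(\<integral>\<^sup>+z. ennreal (iter_kant borel (Q k) delta m (fst z) (snd z)) \<partial>\<pi>)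
      = (\<integral>\<^sup>+z. ennreal \<bar>coord_mean k m (fst z) - coord_mean k m (snd z)\<bar> \<partial>\<pi>)"
    if \<pi>: "\<pi> \<in> couplings borel (?Q (x k)) (?Q (x' k))" for \<pi>
    by (rule nn_integral_cong_AE)
       (use coupling_AE[OF \<pi> _ AE_T[OF Suc.prems(1)] AE_T[OF Suc.prems(2)]] in \<open>auto simp: cost_on_T\<close>)
  have mean_Suc: "(\<integral>t. coord_mean k m t \<partial>?Q (z k)) = mean k (Suc m) z" if "z \<in> supp (Suc m)" for z
    using coord_mean_eq_mean[OF k that] by simp
  note C = mono_coupling(2,3)[OF Suc.prems]
  have [measurable_cong]: "sets (mono_coupling m (x, x')) = sets (borel \<Otimes>\<^sub>M borel)"
    by (rule couplingD(2)[OF C(1)])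
  have [measurable]: "map_prod (\<lambda>y. y k) (\<lambda>y. y k) \<in> mono_coupling m (x, x') \<rightarrow>\<^sub>M borel \<Otimes>\<^sub>M borel"
    by (simp add: map_prod_def)
  define \<pi>0 where "\<pi>0 = distr (mono_coupling m (x, x')) (borel \<Otimes>\<^sub>M borel) (map_prod (\<lambda>y. y k) (\<lambda>y. y k))"
  have \<pi>0: "\<pi>0 \<in> couplings borel (?Q (x k)) (?Q (x' k))"
    using coupling_distr_map_prod[OF C(1) borel_measurable_coordinate[of k]]
    by (simp add: \<pi>0_def distr_step_coordinate[OF k Suc.prems(1)] distr_step_coordinate[OF k Suc.prems(2)])
  have "(AE z in mono_coupling m (x, x'). coord_mean k m (fst z k) \<le> coord_mean k m (snd z k)) \<or>
      (AE z in mono_coupling m (x, x'). coord_mean k m (snd z k) \<le> coord_mean k m (fst z k))"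
    by (rule monotone_coupling_orders[OF C(2) k coupling_step_AE_supp[OF C(1) Suc.prems]])
       (simp add: coord_mean_eq_mean[OF k] mean_mono[OF k])
  then have ordered: "(AE z in \<pi>0. coord_mean k m (fst z) \<le> coord_mean k m (snd z)) \<or>
      (AE z in \<pi>0. coord_mean k m (snd z) \<le> coord_mean k m (fst z))"
    unfolding \<pi>0_def by (subst (1 2) AE_distr_iff) auto
  have "kantorovich borel (iter_kant borel (Q k) delta m) (?Q (x k)) (?Q (x' k)) = ?L"
  proof (rule kantorovich_eqI)
    fix \<pi> assume \<pi>: "\<pi> \<in> couplings borel (?Q (x k)) (?Q (x' k))"
    show "ennreal ?L \<le> (\<integral>\<^sup>+z. ennreal (iter_kant borel (Q k) delta m (fst z) (snd z)) \<partial>\<pi>)"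
      unfolding cost[OF \<pi>]
      using abs_integral_diff_le_coupling[where h="coord_mean k m", OF \<pi> _ coord_mean_unit_interval[OF k]]
      by (simp add: mean_Suc Suc.prems)
  next
    show "(\<integral>\<^sup>+z. ennreal (iter_kant borel (Q k) delta m (fst z) (snd z)) \<partial>\<pi>0) = ennreal ?L"
      unfolding cost[OF \<pi>0]
      using abs_integral_diff_eq_coupling[where h="coord_mean k m", OF \<pi>0 _ coord_mean_unit_interval[OF k] ordered]
      by (simp add: mean_Suc Suc.prems)
  qed (simp_all add: \<pi>0)
  then show ?case by simp
qed


lemma law_to_0_prob_algebra[measurable]: "law_to_0 borel K m \<in> measurable borel (prob_algebra borel)"
  by (rule law_to_0_measurable[OF kernel_measurable])

lemma AE_law_to_0_supp: "x \<in> supp m \<Longrightarrow> AE z in law_to_0 borel K m x. z \<in> supp 0"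
proof (induction m arbitrary: x)
  case 0
  then show ?case unfolding law_to_0.simps by (subst AE_return) auto
next
  case (Suc m)
  have "AE y in step m x. AE z in law_to_0 borel K m y. z \<in> supp 0"
    using AE_step_supp[OF Suc.prems] by eventually_elim (rule Suc.IH)
  moreover have "law_to_0 borel K m \<in> measurable (step m x) (subprob_algebra borel)"
    using measurable_prob_algebraD[OF law_to_0_prob_algebra]
    by (simp add: measurable_cong_sets[OF sets_step refl])
  moreover have "Measurable.pred borel (\<lambda>z. z \<in> supp 0)" by measurable
  ultimately show ?case unfolding law_to_0.simps by (simp add: AE_bind)
qed

lemma integral_clip_law_to_0: "(\<integral>z. clip (z k) \<partial>law_to_0 borel K m x) = mean k m x"
  by (rule integral_law_to_0[OF kernel_measurable]) simp_all

text \<open>The extension by \<open>return\<close> off \<open>supp m \<times> supp m\<close> only serves to make the gluing kernel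
  measurable on the whole product space.\<close>
primrec glued_coupling :: "nat \<Rightarrow> (nat \<Rightarrow> real) \<times> (nat \<Rightarrow> real) \<Rightarrow> ((nat \<Rightarrow> real) \<times> (nat \<Rightarrow> real)) measure" where
  "glued_coupling 0 = return (borel \<Otimes>\<^sub>M borel)"
| "glued_coupling (Suc m) = (\<lambda>p. mono_coupling m p \<bind>
     (\<lambda>q. if q \<in> supp m \<times> supp m then glued_coupling m q else return (borel \<Otimes>\<^sub>M borel) q))"

lemma glued_coupling_measurable:
  "(\<lambda>q. if q \<in> supp m \<times> supp m then glued_coupling m q else return (borel \<Otimes>\<^sub>M borel) q)
    \<in> measurable (borel \<Otimes>\<^sub>M borel) (prob_algebra (borel \<Otimes>\<^sub>M borel))"
proof -
  have supp_pair[measurable]: "supp m \<times> supp m \<in> sets (borel \<Otimes>\<^sub>M borel)" for m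
    by (rule pair_measureI) simp_all
  have extend: "(\<lambda>q. if q \<in> supp m \<times> supp m then glued_coupling m q else return (borel \<Otimes>\<^sub>M borel) q)
      \<in> measurable (borel \<Otimes>\<^sub>M borel) (prob_algebra (borel \<Otimes>\<^sub>M borel))"
    if "glued_coupling m \<in> measurable (restrict_space (borel \<Otimes>\<^sub>M borel) (supp m \<times> supp m))
         (prob_algebra (borel \<Otimes>\<^sub>M borel))" for m
    using that
    by (subst measurable_If_restrict_space_iff)
       (simp_all add: space_pair_measure measurable_restrict_space1[OF measurable_return_prob_space])
  have "glued_coupling m \<in> measurable (restrict_space (borel \<Otimes>\<^sub>M borel) (supp m \<times> supp m))
      (prob_algebra (borel \<Otimes>\<^sub>M borel))"
  proof (induction m)
    case 0
    then show ?case by (simp add: measurable_restrict_space1[OF measurable_return_prob_space])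
  next
    case (Suc m)
    show ?case using measurable_bind_prob_space[OF mono_coupling(1) extend[OF Suc]] by simp
  qed
  then show ?thesis by (rule extend)
qed

lemma glued_coupling:
  assumes "x \<in> supp m" "x' \<in> supp m"
  shows "glued_coupling m (x, x') \<in> couplings borel (law_to_0 borel K m x) (law_to_0 borel K m x') \<and>
    monotone_coupling d (glued_coupling m (x, x')) x x'"
  using assms
proof (induction m arbitrary: x x')
  case 0
  have xx': "(x, x') \<in> space (borel \<Otimes>\<^sub>M borel)" by (simp add: space_pair_measure)
  have "return (borel \<Otimes>\<^sub>M borel) (x, x') \<in> couplings borel (return borel x) (return borel x')"
    using measurable_space[OF measurable_return_prob_space xx']
    by (simp add: couplings_def distr_return[OF measurable_fst xx'] distr_return[OF measurable_snd xx'])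
  moreover have "monotone_coupling d (return (borel \<Otimes>\<^sub>M borel) (x, x')) x x'"
    by (simp add: monotone_coupling_def AE_return[OF xx'])
  ultimately show ?case by simp
next
  case (Suc m)
  note C = mono_coupling(2,3)[OF Suc.prems]
  let ?E = "\<lambda>q. if q \<in> supp m \<times> supp m then glued_coupling m q else return (borel \<Otimes>\<^sub>M borel) q"
  have glue: "AE q in mono_coupling m (x, x').
      ?E q \<in> couplings borel (law_to_0 borel K m (fst q)) (law_to_0 borel K m (snd q)) \<and>
      monotone_coupling d (?E q) (fst q) (snd q)"
    using coupling_step_AE_supp[OF C(1) Suc.prems] by eventually_elim (auto simp: Suc.IH)
  have E: "?E \<in> measurable (mono_coupling m (x, x')) (subprob_algebra (borel \<Otimes>\<^sub>M borel))"
    using measurable_prob_algebraD[OF glued_coupling_measurable]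
    by (simp add: measurable_cong_sets[OF couplingD(2)[OF C(1)] refl])
  show ?case
    using coupling_bind[OF C(1) glued_coupling_measurable law_to_0_prob_algebra]
      monotone_coupling_bind[OF C(2) E] glue
    by (auto elim: AE_mp)
qed

lemma kantorovich_law_to_0:
  assumes x: "x \<in> supp m" and x': "x' \<in> supp m"
  shows "kantorovich borel (rho d a) (law_to_0 borel K m x) (law_to_0 borel K m x') =
    (\<Sum>\<^sub>\<infinity>k\<in>coords d. a k * \<bar>mean k m x - mean k m x'\<bar>)"
proof -
  let ?L = "\<Sum>\<^sub>\<infinity>k\<in>coords d. a k * \<bar>mean k m x - mean k m x'\<bar>"
  have rho_supp: "rho d a y y' = (\<Sum>\<^sub>\<infinity>k\<in>coords d. a k * \<bar>clip (y k) - clip (y' k)\<bar>)"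
    if "y \<in> supp 0" "y' \<in> supp 0" for y y'
    using that supp_subset_cube by (blast intro: rho_clip_on_cube)
  have cost: "(\<integral>\<^sup>+z. ennreal (rho d a (fst z) (snd z)) \<partial>\<pi>)
      = (\<integral>\<^sup>+z. ennreal (\<Sum>\<^sub>\<infinity>k\<in>coords d. a k * \<bar>clip (fst z k) - clip (snd z k)\<bar>) \<partial>\<pi>)"
    if \<pi>: "\<pi> \<in> couplings borel (law_to_0 borel K m x) (law_to_0 borel K m x')" for \<pi>
    by (rule nn_integral_cong_AE)
       (use coupling_AE[OF \<pi> sets_supp AE_law_to_0_supp[OF x] AE_law_to_0_supp[OF x']]
         in \<open>eventually_elim, simp add: rho_supp\<close>)
  note glued = glued_coupling[OF x x']
  show ?thesis
  proof (rule kantorovich_eqI)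
    fix \<pi> assume \<pi>: "\<pi> \<in> couplings borel (law_to_0 borel K m x) (law_to_0 borel K m x')"
    show "ennreal ?L \<le> (\<integral>\<^sup>+z. ennreal (rho d a (fst z) (snd z)) \<partial>\<pi>)"
      unfolding cost[OF \<pi>]
      using weighted_abs_integral_diff_le_coupling[where h="\<lambda>k z. clip (z k)", OF \<pi> _ _ _ a_summable a_nonneg]
      by (simp add: integral_clip_law_to_0)
  next
    have "(AE z in glued_coupling m (x, x'). clip (fst z k) \<le> clip (snd z k)) \<or>
        (AE z in glued_coupling m (x, x'). clip (snd z k) \<le> clip (fst z k))" if k: "k \<in> coords d" for k
      by (rule monotone_coupling_orders[where A=UNIV, OF conjunct2[OF glued] k]) (simp_all add: clip_mono)
    then show "(\<integral>\<^sup>+z. ennreal (rho d a (fst z) (snd z)) \<partial>glued_coupling m (x, x')) = ennreal ?L"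
      unfolding cost[OF conjunct1[OF glued]]
      using weighted_abs_integral_diff_eq_coupling[where h="\<lambda>k z. clip (z k)", OF conjunct1[OF glued] _ _ _ a_summable a_nonneg]
      by (simp add: integral_clip_law_to_0)
  qed (use glued a_nonneg in \<open>auto intro: infsum_nonneg\<close>)
qed

end

theorem proposition4p7:
  fixes d :: enat and a :: "nat \<Rightarrow> real"
    and \<mu> :: "int \<Rightarrow> (nat \<Rightarrow> real) measure"
    and K :: "int \<Rightarrow> (nat \<Rightarrow> real) \<Rightarrow> (nat \<Rightarrow> real) measure"
    and Q :: "nat \<Rightarrow> int \<Rightarrow> real \<Rightarrow> real measure"
  assumes d_pos: "d \<ge> 1"
    and a_pos: "\<forall>k\<in>coords d. a k > 0"
    and a_sum: "(a has_sum 1) (coords d)"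
    and laws: "\<forall>n\<le>0. \<mu> n \<in> space (prob_algebra borel) \<and> emeasure (\<mu> n) (cube d) = 1"
    and kernels: "\<forall>n<0. K n \<in> measurable borel (prob_algebra borel)"
    and markov: "\<forall>n<0. \<mu> (n + 1) = bind (\<mu> n) (K n)"
    and conc: "\<forall>n<0. \<forall>x\<in>measure_support (\<mu> n).
                 emeasure (K n x) (measure_support (\<mu> (n + 1))) = 1"
    and monotonic: "\<forall>n<0. \<exists>C. C \<in> measurable
                 (restrict_space (borel \<Otimes>\<^sub>M borel) (measure_support (\<mu> n) \<times> measure_support (\<mu> n)))
                 (prob_algebra (borel \<Otimes>\<^sub>M borel)) \<and>
               (\<forall>x\<in>measure_support (\<mu> n). \<forall>x'\<in>measure_support (\<mu> n).
                  C (x, x') \<in> couplings borel (K n x) (K n x') \<and> monotone_coupling d (C (x, x')) x x')"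
    and coordinates: "\<forall>k\<in>coords d. \<forall>n<0. Q k n \<in> measurable borel (prob_algebra borel) \<and>
               (\<forall>x\<in>measure_support (\<mu> n). distr (K n x) borel (\<lambda>y. y k) = Q k n (x k))"
  shows "\<forall>n\<le>-1. \<forall>x\<in>measure_support (\<mu> n). \<forall>x'\<in>measure_support (\<mu> n).
           iterated_kantorovich borel K (rho d a) n x x' =
             kantorovich borel (rho d a) (cond_law_X0 borel K n x) (cond_law_X0 borel K n x') \<and>
           iterated_kantorovich borel K (rho d a) n x x' =
             (\<Sum>\<^sub>\<infinity>k\<in>coords d. a k * iterated_kantorovich borel (Q k) delta n (x k) (x' k))"
proof (intro allI impI ballI)
  interpret monotonic_cube_process d a \<mu> K Q
    using a_pos a_sum laws kernels conc monotonic coordinates by unfold_locales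
  fix n :: int and x x' assume "n \<le> -1" "x \<in> measure_support (\<mu> n)" "x' \<in> measure_support (\<mu> n)"
  moreover define m where "m = nat (- n)"
  ultimately have n: "n = - int m" and x: "x \<in> supp m" and x': "x' \<in> supp m"
    by (simp_all add: m_def supp_def)
  have rho: "iterated_kantorovich borel K (rho d a) n x x' = (\<Sum>\<^sub>\<infinity>k\<in>coords d. a k * \<bar>mean k m x - mean k m x'\<bar>)"
    using iter_kant_eq_weighted_means[OF x x'] by (simp add: iterated_kantorovich_def n)
  show "iterated_kantorovich borel K (rho d a) n x x' =
      kantorovich borel (rho d a) (cond_law_X0 borel K n x) (cond_law_X0 borel K n x') \<and>
    iterated_kantorovich borel K (rho d a) n x x' =
      (\<Sum>\<^sub>\<infinity>k\<in>coords d. a k * iterated_kantorovich borel (Q k) delta n (x k) (x' k))"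
    unfolding rho using kantorovich_law_to_0[OF x x'] coord_iter_kant_eq_abs_mean_diff[OF _ x x']
    by (auto simp: cond_law_X0_def iterated_kantorovich_def n intro!: infsum_cong)
qed

end
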